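(* Let $I \subset \mathbb{R}$ be a closed interval, let $0<\alpha\le 1$, and let $f:I\to\mathbb{R}$ be $\alpha$-H\"older continuous, i.e. there is $C>0$ with $|f(t)-f(s)|\le C|t-s|^\alpha$ for all $t,s\in I$. Then $$\dim_{A,reg}^\theta \operatorname{Graph}(f) \leq \frac{2-\alpha-\theta}{1-\theta}$$ for all $\theta\in(0,\alpha)$.
   Context: $\operatorname{Graph}(f)=\{(t,f(t)):t\in I\}\subset\mathbb{R}^2$. For a bounded set $F\subset\mathbb{R}^2$ and $r>0$, $N(F,r)$ denotes the least number of sets of diameter at most $r$ needed to cover $F$, and $D(\mathbf z,R)$ is the closed disc of radius $R$ centered at $\mathbf z$. For $E\subset\mathbb{R}^2$ and $\theta\in(0,1)$, the regularized (upper) Assouad spectrum is $$\dim_{A,reg}^\theta(E)=\inf\{\gamma>0:\ \exists C>0 \text{ such that } N(D(\mathbf z,R)\cap E,r)\le C(R/r)^\gamma \text{ for all } 0<r\le R^{1/\theta}<R<1 \text{ and all } \mathbf z\in E\}.$$ Equivalently, $\dim_{A,reg}^\theta(E)=\sup_{0<\theta'<\theta}\dim_A^{\theta'}(E)$, where $\dim_A^{\theta}(E)$ is defined in the same way but with the scales restricted to $r=R^{1/\theta}$. *)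

theory Defs
  imports "HOL-Analysis.Analysis"
begin

text \<open>Graph of f over I, as a subset of the plane (real \<times> real carries the Euclidean metric).\<close>
definition graph_of :: "(real \<Rightarrow> real) \<Rightarrow> real set \<Rightarrow> (real \<times> real) set" where
  "graph_of f I = {(t, f t) | t. t \<in> I}"

text \<open>N(F,r): least number of sets of diameter at most r needed to cover F.
  Covering sets are required to be bounded so that diameter is meaningful.\<close>
definition cover_num :: "(real \<times> real) set \<Rightarrow> real \<Rightarrow> nat" where
  "cover_num F r = (LEAST n. \<exists>C. finite C \<and> card C = n \<and>
       (\<forall>S\<in>C. bounded S \<and> diameter S \<le> r) \<and> F \<subseteq> \<Union>C)"

text \<open>Regularized (upper) Assouad spectrum, valued in ereal (Inf of the empty set is \<infinity>).\<close>
definition assouad_spec_reg :: "real \<Rightarrow> (real \<times> real) set \<Rightarrow> ereal" where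
  "assouad_spec_reg \<theta> E = Inf {ereal \<gamma> | \<gamma>. \<gamma> > 0 \<and>
     (\<exists>C>0. \<forall>r R z. 0 < r \<and> 0 < R \<and> r \<le> R powr (1/\<theta>) \<and> R powr (1/\<theta>) < R \<and> R < 1 \<and> z \<in> E
        \<longrightarrow> real (cover_num (cball z R \<inter> E) r) \<le> C * (R / r) powr \<gamma>)}"

end

theory Submission
  imports Defs
begin

(* Cover the ball by the cells of the square grid of mesh s = r/2. Over a column of width s the
   graph oscillates by at most H s^\<alpha>, so it meets O(R/s) columns, each in O(1 + H s^(\<alpha>-1))
   cells; hence N \<le> c (R/r) (1 + H r^(\<alpha>-1)). On the regularized scales r^\<theta> \<le> R, which gives
   r^(\<alpha>-1) \<le> (R/r)^((1-\<alpha>)/(1-\<theta>)), and the bound becomes C (R/r)^((2-\<alpha>-\<theta>)/(1-\<theta>)). *)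

definition holder_on :: "real \<Rightarrow> real \<Rightarrow> real set \<Rightarrow> (real \<Rightarrow> real) \<Rightarrow> bool" where
  "holder_on H \<alpha> S f \<longleftrightarrow> (\<forall>t\<in>S. \<forall>u\<in>S. \<bar>f t - f u\<bar> \<le> H * \<bar>t - u\<bar> powr \<alpha>)"

lemma holder_on_subset: "holder_on H \<alpha> S f \<Longrightarrow> T \<subseteq> S \<Longrightarrow> holder_on H \<alpha> T f"
  unfolding holder_on_def by blast

lemma cover_num_le_card_labels:
  fixes \<phi> :: "real \<times> real \<Rightarrow> 'a"
  assumes "bounded F" "finite L" "\<phi> ` F \<subseteq> L"
    and "\<And>p q. p \<in> F \<Longrightarrow> q \<in> F \<Longrightarrow> \<phi> p = \<phi> q \<Longrightarrow> dist p q \<le> r"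
  shows "cover_num F r \<le> card L"
proof -
  define C where "C = (\<lambda>k. {p \<in> F. \<phi> p = k}) ` \<phi> ` F"
  have fin: "finite (\<phi> ` F)"
    using assms(2,3) by (rule finite_subset[rotated])
  have "\<forall>S\<in>C. bounded S \<and> diameter S \<le> r"
  proof
    fix S assume "S \<in> C"
    then obtain p0 where p0: "p0 \<in> F" and S: "S = {p \<in> F. \<phi> p = \<phi> p0}"
      unfolding C_def by blast
    show "bounded S \<and> diameter S \<le> r"
    proof
      show "bounded S"
        using assms(1) S by (auto intro: bounded_subset)
      show "diameter S \<le> r"
      proof (rule diameter_le)
        show "S \<noteq> {} \<or> 0 \<le> r"
          using p0 S by blast
        fix p q assume "p \<in> S" "q \<in> S"
        then have "p \<in> F" "q \<in> F" "\<phi> p = \<phi> q"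
          using S by auto
        then have "dist p q \<le> r"
          by (rule assms(4))
        then show "norm (p - q) \<le> r"
          by (simp only: dist_norm)
      qed
    qed
  qed
  moreover have "F \<subseteq> \<Union>C"
    unfolding C_def by blast
  moreover have "finite C"
    unfolding C_def using fin by (rule finite_imageI)
  ultimately have "cover_num F r \<le> card C"
    unfolding cover_num_def by (intro Least_le) blast
  also have "\<dots> \<le> card (\<phi> ` F)"
    unfolding C_def using fin by (rule card_image_le)
  also have "\<dots> \<le> card L"
    using assms(2,3) by (rule card_mono)
  finally show ?thesis .
qed

definition grid_index :: "real \<Rightarrow> real \<times> real \<Rightarrow> int \<times> int" where
  "grid_index s p = (\<lfloor>fst p / s\<rfloor>, \<lfloor>snd p / s\<rfloor>)"

lemma abs_diff_less_if_floor_divide_eq: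
  fixes x y s :: real
  assumes "0 < s" "\<lfloor>x / s\<rfloor> = \<lfloor>y / s\<rfloor>"
  shows "\<bar>x - y\<bar> < s"
proof -
  have "\<bar>x / s - y / s\<bar> < 1"
    using assms(2) by linarith
  then show ?thesis
    using assms(1) by (simp add: diff_divide_distrib[symmetric] abs_divide)
qed

lemma dist_less_if_grid_index_eq:
  assumes "0 < s" "grid_index s p = grid_index s q"
  shows "dist p q < 2 * s"
proof -
  obtain x y x' y' where pq: "p = (x, y)" "q = (x', y')"
    by fastforce
  have "\<bar>x - x'\<bar> < s" "\<bar>y - y'\<bar> < s"
    using assms pq by (auto simp: grid_index_def intro: abs_diff_less_if_floor_divide_eq)
  moreover have "dist p q \<le> \<bar>x - x'\<bar> + \<bar>y - y'\<bar>"
    using sqrt_sum_squares_le_sum_abs[of "x - x'" "y - y'"]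
    by (simp add: pq dist_Pair_Pair dist_real_def)
  ultimately show ?thesis
    by linarith
qed

lemma abs_floor_diff_le_ceiling:
  fixes x y d :: real
  assumes "\<bar>x - y\<bar> \<le> d"
  shows "\<bar>\<lfloor>x\<rfloor> - \<lfloor>y\<rfloor>\<bar> \<le> \<lceil>d\<rceil>"
proof -
  have "real_of_int \<bar>\<lfloor>x\<rfloor> - \<lfloor>y\<rfloor>\<bar> < d + 1"
    using assms by linarith
  then show ?thesis
    by linarith
qed

lemma grid_index_holder_graph_subset:
  fixes f :: "real \<Rightarrow> real"
  assumes holder: "holder_on H \<alpha> S f" and "0 \<le> H" "0 \<le> \<alpha>" "0 < s" and S: "S \<subseteq> {u..v}"
  obtains c where "grid_index s ` graph_of f S \<subseteq>
    (SIGMA i:{\<lfloor>u / s\<rfloor>..\<lfloor>v / s\<rfloor>}. {c i - \<lceil>H * s powr (\<alpha> - 1)\<rceil> .. c i + \<lceil>H * s powr (\<alpha> - 1)\<rceil>})"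
proof -
  define K where "K = \<lceil>H * s powr (\<alpha> - 1)\<rceil>"
  \<comment> \<open>a reference point of \<open>S\<close> in column \<open>i\<close>; junk if the column misses \<open>S\<close>, which is harmless\<close>
  define col where "col i = (SOME t. t \<in> S \<and> \<lfloor>t / s\<rfloor> = i)" for i
  have "grid_index s (t, f t) \<in>
      (SIGMA i:{\<lfloor>u / s\<rfloor>..\<lfloor>v / s\<rfloor>}. {\<lfloor>f (col i) / s\<rfloor> - K .. \<lfloor>f (col i) / s\<rfloor> + K})"
    if t: "t \<in> S" for t
  proof -
    define i where "i = \<lfloor>t / s\<rfloor>"
    have column: "i \<in> {\<lfloor>u / s\<rfloor>..\<lfloor>v / s\<rfloor>}"
      using t S \<open>0 < s\<close> by (auto simp: i_def intro!: floor_mono divide_right_mono)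
    have col: "col i \<in> S" "\<lfloor>col i / s\<rfloor> = i"
      using someI_ex[of "\<lambda>t'. t' \<in> S \<and> \<lfloor>t' / s\<rfloor> = i"] t by (auto simp: col_def i_def)
    have "\<bar>f t - f (col i)\<bar> \<le> H * \<bar>t - col i\<bar> powr \<alpha>"
      using holder t col by (auto simp: holder_on_def)
    also have "\<dots> \<le> H * s powr \<alpha>"
      using abs_diff_less_if_floor_divide_eq[of s t "col i"] col assms(2-4)
      by (intro mult_left_mono powr_mono2) (auto simp: i_def)
    finally have "\<bar>f t / s - f (col i) / s\<bar> \<le> H * s powr (\<alpha> - 1)"
      using \<open>0 < s\<close> by (simp add: diff_divide_distrib[symmetric] abs_divide powr_diff divide_right_mono)
    then have "\<bar>\<lfloor>f t / s\<rfloor> - \<lfloor>f (col i) / s\<rfloor>\<bar> \<le> K"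
      unfolding K_def by (rule abs_floor_diff_le_ceiling)
    with column show ?thesis
      by (auto simp: grid_index_def i_def)
  qed
  then have "grid_index s ` graph_of f S \<subseteq>
      (SIGMA i:{\<lfloor>u / s\<rfloor>..\<lfloor>v / s\<rfloor>}. {\<lfloor>f (col i) / s\<rfloor> - K .. \<lfloor>f (col i) / s\<rfloor> + K})"
    unfolding graph_of_def by blast
  then show ?thesis
    unfolding K_def by (rule that)
qed

lemma cover_num_cball_holder_graph_le:
  fixes f :: "real \<Rightarrow> real"
  assumes holder: "holder_on H \<alpha> S f" and "0 \<le> H" "0 \<le> \<alpha>" "0 < s" "0 \<le> R"
  shows "real (cover_num (cball z R \<inter> graph_of f S) (2 * s))
           \<le> (2 * R / s + 2) * (2 * H * s powr (\<alpha> - 1) + 3)"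
proof -
  define K where "K = \<lceil>H * s powr (\<alpha> - 1)\<rceil>"
  define u where "u = fst z - R"
  define v where "v = fst z + R"
  have "cball z R \<inter> graph_of f S \<subseteq> graph_of f (S \<inter> {u..v})"
  proof
    fix p assume p: "p \<in> cball z R \<inter> graph_of f S"
    then obtain t where "t \<in> S" "p = (t, f t)"
      by (auto simp: graph_of_def)
    moreover have "\<bar>fst z - t\<bar> \<le> R"
      using p dist_fst_le[of z p] \<open>p = (t, f t)\<close> by (simp add: dist_real_def)
    ultimately show "p \<in> graph_of f (S \<inter> {u..v})"
      by (auto simp: graph_of_def u_def v_def)
  qed
  moreover have "holder_on H \<alpha> (S \<inter> {u..v}) f"
    using holder by (rule holder_on_subset) blast
  then obtain c where "grid_index s ` graph_of f (S \<inter> {u..v}) \<subseteq>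
      (SIGMA i:{\<lfloor>u / s\<rfloor>..\<lfloor>v / s\<rfloor>}. {c i - K .. c i + K})"
    unfolding K_def using assms(2-4) by (rule grid_index_holder_graph_subset) blast+
  ultimately have labels: "grid_index s ` (cball z R \<inter> graph_of f S) \<subseteq>
      (SIGMA i:{\<lfloor>u / s\<rfloor>..\<lfloor>v / s\<rfloor>}. {c i - K .. c i + K})"
    by blast
  have "cover_num (cball z R \<inter> graph_of f S) (2 * s)
          \<le> card (SIGMA i:{\<lfloor>u / s\<rfloor>..\<lfloor>v / s\<rfloor>}. {c i - K .. c i + K})"
  proof (rule cover_num_le_card_labels[OF _ _ labels])
    show "bounded (cball z R \<inter> graph_of f S)"
      by (simp add: bounded_Int)
    show "finite (SIGMA i:{\<lfloor>u / s\<rfloor>..\<lfloor>v / s\<rfloor>}. {c i - K .. c i + K})"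
      by simp
    show "dist p q \<le> 2 * s" if "grid_index s p = grid_index s q" for p q
      using dist_less_if_grid_index_eq[OF \<open>0 < s\<close> that] by simp
  qed
  also have "\<dots> = nat (\<lfloor>v / s\<rfloor> - \<lfloor>u / s\<rfloor> + 1) * nat (2 * K + 1)"
    by simp
  finally have "real (cover_num (cball z R \<inter> graph_of f S) (2 * s))
      \<le> real (nat (\<lfloor>v / s\<rfloor> - \<lfloor>u / s\<rfloor> + 1)) * real (nat (2 * K + 1))"
    by (simp only: of_nat_le_iff of_nat_mult[symmetric])
  also have "\<dots> \<le> (2 * R / s + 2) * (2 * H * s powr (\<alpha> - 1) + 3)"
  proof (rule mult_mono)
    have "u / s \<le> v / s"
      using \<open>0 < s\<close> \<open>0 \<le> R\<close> by (simp add: u_def v_def divide_right_mono)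
    then have "0 \<le> \<lfloor>v / s\<rfloor> - \<lfloor>u / s\<rfloor> + 1"
      using floor_mono[of "u / s" "v / s"] by linarith
    then have "real (nat (\<lfloor>v / s\<rfloor> - \<lfloor>u / s\<rfloor> + 1)) = \<lfloor>v / s\<rfloor> - \<lfloor>u / s\<rfloor> + 1"
      by simp
    also have "\<dots> < v / s - u / s + 2"
      by linarith
    also have "v / s - u / s = 2 * R / s"
      by (simp add: u_def v_def diff_divide_distrib[symmetric])
    finally show "real (nat (\<lfloor>v / s\<rfloor> - \<lfloor>u / s\<rfloor> + 1)) \<le> 2 * R / s + 2"
      by simp
    have "0 \<le> H * s powr (\<alpha> - 1)"
      using \<open>0 \<le> H\<close> by simp
    then have "0 \<le> K"
      unfolding K_def by linarith
    then have "real (nat (2 * K + 1)) = 2 * K + 1"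
      by simp
    also have "\<dots> < 2 * H * s powr (\<alpha> - 1) + 3"
      unfolding K_def by linarith
    finally show "real (nat (2 * K + 1)) \<le> 2 * H * s powr (\<alpha> - 1) + 3"
      by simp
    show "0 \<le> real (nat (2 * K + 1))" "0 \<le> 2 * R / s + 2"
      using assms(4,5) by simp_all
  qed
  finally show ?thesis .
qed

lemma ratio_mult_powr_le_ratio_powr:
  fixes r R \<alpha> \<theta> :: real
  assumes "0 < r" "r \<le> R powr (1 / \<theta>)" "0 < R" "\<alpha> \<le> 1" "0 < \<theta>" "\<theta> < 1"
  shows "(R / r) * r powr (\<alpha> - 1) \<le> (R / r) powr ((2 - \<alpha> - \<theta>) / (1 - \<theta>))"
proof -
  define k where "k = (1 - \<alpha>) / (1 - \<theta>)"
  have "0 \<le> k"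
    using assms(4,6) by (simp add: k_def)
  have "r powr \<theta> \<le> (R powr (1 / \<theta>)) powr \<theta>"
    using assms(1,2,5) by (intro powr_mono2) auto
  also have "\<dots> = R"
    using assms(3,5) by (simp add: powr_powr)
  finally have "r powr \<theta> \<le> R" .
  have "r powr (\<alpha> - 1) * r powr k = (r powr \<theta>) powr k"
    using assms(6) by (simp add: k_def powr_powr powr_add[symmetric] field_simps)
  also have "\<dots> \<le> R powr k"
    using \<open>r powr \<theta> \<le> R\<close> \<open>0 \<le> k\<close> by (intro powr_mono2) auto
  finally have "r powr (\<alpha> - 1) \<le> (R / r) powr k"
    using assms(1,3) by (simp add: powr_divide field_simps)
  then have "(R / r) * r powr (\<alpha> - 1) \<le> (R / r) * (R / r) powr k"
    using assms(1,3) by (intro mult_left_mono) auto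
  also have "\<dots> = (R / r) powr (1 + k)"
    using assms(1,3) by (simp add: powr_add)
  also have "1 + k = (2 - \<alpha> - \<theta>) / (1 - \<theta>)"
    using assms(6) by (simp add: k_def field_simps)
  finally show ?thesis .
qed

lemma cover_num_cball_holder_graph_le_ratio_powr:
  fixes f :: "real \<Rightarrow> real"
  assumes holder: "holder_on H \<alpha> S f" and "0 \<le> H" "0 \<le> \<alpha>" "\<alpha> \<le> 1" "0 < \<theta>" "\<theta> < 1"
    and "0 < r" "r \<le> R powr (1 / \<theta>)" "r \<le> R"
  shows "real (cover_num (cball z R \<inter> graph_of f S) r)
           \<le> (24 * H + 18) * (R / r) powr ((2 - \<alpha> - \<theta>) / (1 - \<theta>))"
proof -
  define \<gamma> where "\<gamma> = (2 - \<alpha> - \<theta>) / (1 - \<theta>)"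
  define X where "X = R / r"
  define Q where "Q = r powr (\<alpha> - 1)"
  have "1 \<le> X"
    using assms(7,9) by (simp add: X_def)
  have "1 \<le> \<gamma>"
    using assms(4,6) by (simp add: \<gamma>_def field_simps)
  have "(r / 2) powr (\<alpha> - 1) = Q * 2 powr (1 - \<alpha>)"
    using assms(7) by (simp add: Q_def powr_divide powr_diff)
  also have "\<dots> \<le> Q * 2"
    using assms(3) powr_mono[of "1 - \<alpha>" 1 2] by (intro mult_left_mono) (auto simp: Q_def)
  finally have half: "(r / 2) powr (\<alpha> - 1) \<le> 2 * Q"
    by simp
  have "real (cover_num (cball z R \<inter> graph_of f S) r)
      \<le> (2 * R / (r / 2) + 2) * (2 * H * (r / 2) powr (\<alpha> - 1) + 3)"
    using cover_num_cball_holder_graph_le[OF holder assms(2,3), of "r / 2" R z] assms(7,9)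
    by simp
  also have "\<dots> \<le> (6 * X) * (4 * H * Q + 3)"
  proof (rule mult_mono)
    show "2 * R / (r / 2) + 2 \<le> 6 * X"
      using \<open>1 \<le> X\<close> assms(7) by (simp add: X_def field_simps)
    show "2 * H * (r / 2) powr (\<alpha> - 1) + 3 \<le> 4 * H * Q + 3"
      using mult_left_mono[OF half assms(2)] by simp
  qed (use \<open>1 \<le> X\<close> assms(2) in auto)
  also have "\<dots> = 24 * H * (X * Q) + 18 * X"
    by (simp add: algebra_simps)
  also have "\<dots> \<le> 24 * H * X powr \<gamma> + 18 * X powr \<gamma>"
  proof (intro add_mono mult_left_mono)
    show "X * Q \<le> X powr \<gamma>"
      unfolding X_def Q_def \<gamma>_def using assms(4-9)
      by (intro ratio_mult_powr_le_ratio_powr) auto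
    show "X \<le> X powr \<gamma>"
      using powr_mono[OF \<open>1 \<le> \<gamma>\<close> \<open>1 \<le> X\<close>] \<open>1 \<le> X\<close> by simp
  qed (use assms(2) in auto)
  finally show ?thesis
    by (simp add: X_def \<gamma>_def algebra_simps)
qed

lemma assouad_spec_reg_le:
  assumes "0 < \<gamma>" "0 < C"
    and "\<And>r R z. 0 < r \<Longrightarrow> 0 < R \<Longrightarrow> r \<le> R powr (1 / \<theta>) \<Longrightarrow> R powr (1 / \<theta>) < R \<Longrightarrow> R < 1
           \<Longrightarrow> z \<in> E \<Longrightarrow> real (cover_num (cball z R \<inter> E) r) \<le> C * (R / r) powr \<gamma>"
  shows "assouad_spec_reg \<theta> E \<le> ereal \<gamma>"
  unfolding assouad_spec_reg_def using assms by (intro Inf_lower) blast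

theorem theorem1p1:
  fixes f :: "real \<Rightarrow> real" and a b \<alpha> \<theta> :: real
  assumes "a < b"
    and "0 < \<alpha>" and "\<alpha> \<le> 1"
    and "\<exists>C>0. \<forall>t\<in>{a..b}. \<forall>s\<in>{a..b}. \<bar>f t - f s\<bar> \<le> C * \<bar>t - s\<bar> powr \<alpha>"
    and "0 < \<theta>" and "\<theta> < \<alpha>"
  shows "assouad_spec_reg \<theta> (graph_of f {a..b}) \<le> ereal ((2 - \<alpha> - \<theta>) / (1 - \<theta>))"
proof -
  obtain H where "0 < H" and holder: "holder_on H \<alpha> {a..b} f"
    using assms(4) unfolding holder_on_def by blast
  show ?thesis
  proof (rule assouad_spec_reg_le)
    show "0 < 24 * H + 18"
      using \<open>0 < H\<close> by simp
    show "0 < (2 - \<alpha> - \<theta>) / (1 - \<theta>)"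
      using assms(3,6) by simp
    show "real (cover_num (cball z R \<inter> graph_of f {a..b}) r)
        \<le> (24 * H + 18) * (R / r) powr ((2 - \<alpha> - \<theta>) / (1 - \<theta>))"
      if "0 < r" "r \<le> R powr (1 / \<theta>)" "R powr (1 / \<theta>) < R" for r R z
      using that assms(2,3,5,6) \<open>0 < H\<close>
      by (intro cover_num_cball_holder_graph_le_ratio_powr[OF holder]) auto
  qed
qed

end
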